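(* Let $q\ge2$ and let $W$ be a $q$-ary symmetric channel on an alphabet $\mathcal{X}=\mathcal{Y}$ with $|\mathcal{X}|=q$, i.e., $W(y|x)=v$ if $y=x$ and $W(y|x)=u$ if $y\ne x$, where $u,v\in[0,1]$ and $v=1-(q-1)u$. Then $$\eta^J_\infty(W):=\sup_{P_0,P_1\in\Delta(\mathcal{X})}\frac{D^J_\infty(Q_0,Q_1)}{D^J_\infty(P_0,P_1)}=\frac{|v-u|}{v+u},$$ where $Q_i(y)=\sum_xP_i(x)W(y|x)$. Furthermore, this supremum is achieved in the limit by uniform binary distributions (distinct input pairs supported on a common two-element set that both converge to the uniform distribution on that set).
   Context: $\Delta(\mathcal{X})$ is the probability simplex on $\mathcal{X}$. $D_\infty(P\|Q)=\log\max_x\frac{P(x)}{Q(x)}$ and $D^J_\infty(P,Q)=D_\infty(P\|Q)+D_\infty(Q\|P)$. *)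

theory Defs
  imports "HOL-Analysis.Analysis"
begin

definition prob_simplex :: "('a::finite \<Rightarrow> real) set" where
  "prob_simplex = {P. (\<forall>x. 0 \<le> P x) \<and> (\<Sum>x\<in>UNIV. P x) = 1}"

definition Dinf :: "('a::finite \<Rightarrow> real) \<Rightarrow> ('a \<Rightarrow> real) \<Rightarrow> ereal" where
  "Dinf P Q = (if \<exists>x. P x > 0 \<and> Q x = 0 then \<infinity>
               else ereal (ln (Max ((\<lambda>x. P x / Q x) ` {x. P x > 0}))))"

definition DJinf :: "('a::finite \<Rightarrow> real) \<Rightarrow> ('a \<Rightarrow> real) \<Rightarrow> ereal" where
  "DJinf P Q = Dinf P Q + Dinf Q P"

text \<open>Output distribution of channel W (W y x = W(y|x)) on input P.\<close>
definition chan_out :: "('b \<Rightarrow> 'a::finite \<Rightarrow> real) \<Rightarrow> ('a \<Rightarrow> real) \<Rightarrow> 'b \<Rightarrow> real" where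
  "chan_out W P y = (\<Sum>x\<in>UNIV. P x * W y x)"

definition qsc :: "real \<Rightarrow> real \<Rightarrow> 'a \<Rightarrow> 'a \<Rightarrow> real" where
  "qsc u v y x = (if y = x then v else u)"

text \<open>Contraction coefficient for the Jeffreys max-divergence; the supremum ranges over
  pairs of input distributions with 0 < D^J_inf(P0,P1) < infinity (ratio well defined).\<close>
definition etaJ_inf :: "('a \<Rightarrow> 'a::finite \<Rightarrow> real) \<Rightarrow> ereal" where
  "etaJ_inf W = (SUP (P0, P1) \<in> {(P0, P1). P0 \<in> prob_simplex \<and> P1 \<in> prob_simplex \<and>
                     0 < DJinf P0 P1 \<and> DJinf P0 P1 < \<infinity>}.
                   DJinf (chan_out W P0) (chan_out W P1) / DJinf P0 P1)"

end

(*
  Write h = max u v and l = min u v, so that |v - u| / (v + u) = (h - l) / (h + l), and let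
  D_inf(P0||P1) = ln M, D_inf(P1||P0) = ln M'.  The channel acts pointwise affinely,
  Q_i(y) = u + (v - u) P_i(y), so Q0(y) / Q1(y) is at most the maximum of a linear-fractional
  function over the polygon cut out by P0 <= M P1, P1 <= M' P0 and unit total mass.  After a
  change of variables the logarithms of the two resulting bounds add up to an increment of
  t |-> ln ((h e^t + l) / (l e^t + h)) over an interval of length ln M + ln M', and the slope of
  this function is at most (h - l) / (h + l) because h l (z - 1)^2 >= 0.

  For the lower bound, the pair ((1 +- t)/2, (1 -+ t)/2) on {a, b} has Jeffreys max-divergence
  4 artanh t, its image under the channel has 4 |artanh (k t)| with k = (v - u) / (v + u), and
  the ratio tends to |k| as t -> 0.
*)
theory Submission
  imports Defs
begin

lemma prob_simplex_nonneg: "P \<in> prob_simplex \<Longrightarrow> 0 \<le> P x"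
  by (simp add: prob_simplex_def)

lemma prob_simplex_sum: "P \<in> prob_simplex \<Longrightarrow> (\<Sum>x\<in>UNIV. P x) = 1"
  by (simp add: prob_simplex_def)

lemma prob_simplex_le_1:
  assumes "P \<in> prob_simplex"
  shows "P x \<le> 1"
proof -
  have "P x \<le> (\<Sum>y\<in>UNIV. P y)"
    by (rule member_le_sum) (use assms in \<open>auto simp: prob_simplex_nonneg\<close>)
  then show ?thesis using prob_simplex_sum[OF assms] by simp
qed

lemma prob_simplex_ex_pos:
  assumes "P \<in> prob_simplex"
  obtains x where "0 < P x"
proof (rule ccontr)
  assume "\<not> thesis"
  with that have "\<forall>x. P x = 0" using prob_simplex_nonneg[OF assms] by (metis less_eq_real_def)
  then show False using prob_simplex_sum[OF assms] by simp
qed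

lemma prob_simplex_scaled_diff_le:
  assumes "P \<in> prob_simplex" "Q \<in> prob_simplex" "\<forall>x. P x \<le> c * Q x"
  shows "c * Q y - P y \<le> c - 1"
proof -
  have "c * Q y - P y \<le> (\<Sum>x\<in>UNIV. c * Q x - P x)"
    by (rule member_le_sum) (use assms in auto)
  also have "\<dots> = c - 1"
    using prob_simplex_sum[OF assms(1)] prob_simplex_sum[OF assms(2)]
    by (simp add: sum_subtractf sum_distrib_left[symmetric])
  finally show ?thesis .
qed

lemma prob_simplex_eq_of_le:
  assumes "P \<in> prob_simplex" "Q \<in> prob_simplex" "\<forall>x. P x \<le> Q x"
  shows "P = Q"
proof
  fix x
  have "Q x \<le> P x"
    using prob_simplex_scaled_diff_le[of P Q 1 x] assms by simp
  then show "P x = Q x"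
    using assms(3) by (meson order_antisym)
qed

lemma Dinf_neq_minf: "Dinf P Q \<noteq> -\<infinity>"
  unfolding Dinf_def by auto

lemma Dinf_eq_ln_at_max:
  assumes "0 < P x0" "\<forall>x. 0 < P x \<longrightarrow> 0 < Q x"
    and "\<forall>x. 0 < P x \<longrightarrow> P x / Q x \<le> P x0 / Q x0"
  shows "Dinf P Q = ereal (ln (P x0 / Q x0))"
proof -
  have "Max ((\<lambda>x. P x / Q x) ` {x. P x > 0}) = P x0 / Q x0"
    by (rule Max_eqI) (use assms in auto)
  then show ?thesis unfolding Dinf_def using assms(2) by force
qed

lemma Dinf_self:
  assumes "P \<in> prob_simplex"
  shows "Dinf P P = 0"
proof -
  obtain x0 where "0 < P x0" using prob_simplex_ex_pos[OF assms] .
  then have "Dinf P P = ereal (ln (P x0 / P x0))"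
    by (intro Dinf_eq_ln_at_max) auto
  then show ?thesis using \<open>0 < P x0\<close> by (simp add: zero_ereal_def)
qed

lemma Dinf_le_ln:
  assumes "\<forall>x. 0 \<le> Q x" "0 < P x0" "\<forall>x. P x \<le> K * Q x"
  shows "Dinf P Q \<le> ereal (ln K)"
proof -
  have Q_pos: "0 < Q x" if "0 < P x" for x
    using assms(1,3) that by (metis less_eq_real_def linorder_not_less mult_zero_right)
  have ratio_le: "P x / Q x \<le> K" if "0 < P x" for x
    using assms(3) Q_pos[OF that] by (simp add: pos_divide_le_eq mult.commute)
  let ?S = "(\<lambda>x. P x / Q x) ` {x. P x > 0}"
  have "0 < P x0 / Q x0" using assms(2) Q_pos[OF assms(2)] by simp
  also have "\<dots> \<le> Max ?S" using assms(2) by (intro Max_ge) auto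
  finally have "0 < Max ?S" .
  moreover have "Max ?S \<le> K" using assms(2) ratio_le by (subst Max_le_iff) auto
  ultimately show ?thesis unfolding Dinf_def using Q_pos by (auto simp: less_le)
qed

lemma Dinf_finite_obtain:
  assumes P: "P \<in> prob_simplex" and Q: "Q \<in> prob_simplex" and fin: "Dinf P Q \<noteq> \<infinity>"
  obtains M where "1 \<le> M" "Dinf P Q = ereal (ln M)" "\<forall>x. P x \<le> M * Q x"
proof -
  define M where "M = Max ((\<lambda>x. P x / Q x) ` {x. P x > 0})"
  have Q_pos: "0 < Q x" if "0 < P x" for x
  proof (rule ccontr)
    assume "\<not> 0 < Q x"
    then have "Q x = 0" using prob_simplex_nonneg[OF Q, of x] by simp
    then have "Dinf P Q = \<infinity>" unfolding Dinf_def using that by auto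
    with fin show False ..
  qed
  have P_le: "P x \<le> M * Q x" for x
  proof (cases "0 < P x")
    case True
    have "P x / Q x \<le> M" unfolding M_def using True by (intro Max_ge) auto
    then show ?thesis using Q_pos[OF True] by (simp add: pos_divide_le_eq mult.commute)
  next
    case False
    obtain x0 where "0 < P x0" using prob_simplex_ex_pos[OF P] .
    have "0 < P x0 / Q x0" using \<open>0 < P x0\<close> Q_pos by simp
    also have "\<dots> \<le> M" unfolding M_def using \<open>0 < P x0\<close> by (intro Max_ge) auto
    finally show ?thesis
      using False prob_simplex_nonneg[OF P, of x] prob_simplex_nonneg[OF Q, of x] by simp
  qed
  have "(\<Sum>x\<in>UNIV. P x) \<le> (\<Sum>x\<in>UNIV. M * Q x)" by (rule sum_mono) (rule P_le)
  then have "1 \<le> M" using prob_simplex_sum[OF P] prob_simplex_sum[OF Q]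
    by (simp add: sum_distrib_left[symmetric])
  moreover have "Dinf P Q = ereal (ln M)"
    unfolding Dinf_def M_def using Q_pos by (auto simp: less_le)
  ultimately show ?thesis using that P_le by blast
qed

lemma DJinf_finite_imp_Dinf_finite:
  assumes "DJinf P Q < \<infinity>"
  shows "Dinf P Q \<noteq> \<infinity>" "Dinf Q P \<noteq> \<infinity>"
  using assms Dinf_neq_minf[of P Q] Dinf_neq_minf[of Q P] unfolding DJinf_def by auto

lemma DJinf_pos_finite_of_same_support:
  assumes P: "P \<in> prob_simplex" and Q: "Q \<in> prob_simplex" and "P \<noteq> Q"
    and supp: "{x. 0 < P x} = {x. 0 < Q x}"
  shows "0 < DJinf P Q" "DJinf P Q < \<infinity>"
proof -
  have pos_iff: "0 < P x \<longleftrightarrow> 0 < Q x" for x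
    using supp by (simp add: set_eq_iff)
  then have "\<not> (\<exists>x. 0 < P x \<and> Q x = 0)" "\<not> (\<exists>x. 0 < Q x \<and> P x = 0)"
    by (metis less_irrefl)+
  then have fin: "Dinf P Q \<noteq> \<infinity>" "Dinf Q P \<noteq> \<infinity>"
    unfolding Dinf_def by simp_all
  obtain M where M: "1 \<le> M" "Dinf P Q = ereal (ln M)" "\<forall>x. P x \<le> M * Q x"
    using Dinf_finite_obtain[OF P Q fin(1)] .
  obtain M' where M': "1 \<le> M'" "Dinf Q P = ereal (ln M')"
    using Dinf_finite_obtain[OF Q P fin(2)] by blast
  show "DJinf P Q < \<infinity>" unfolding DJinf_def M(2) M'(2) by simp
  have "M \<noteq> 1" using M(3) prob_simplex_eq_of_le[OF P Q] \<open>P \<noteq> Q\<close> by auto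
  then have "0 < ln M" using M(1) by simp
  moreover have "0 \<le> ln M'" using M'(1) by simp
  ultimately show "0 < DJinf P Q" unfolding DJinf_def M(2) M'(2) by simp
qed

lemma chan_out_qsc:
  fixes P :: "'a::finite \<Rightarrow> real"
  shows "chan_out (qsc u v) P y = u * (\<Sum>x\<in>UNIV. P x) + (v - u) * P y"
proof -
  have "chan_out (qsc u v) P y = (\<Sum>x\<in>UNIV. u * P x + (if y = x then (v - u) * P x else 0))"
    unfolding chan_out_def by (rule sum.cong) (auto simp: qsc_def algebra_simps)
  also have "\<dots> = u * (\<Sum>x\<in>UNIV. P x) + (v - u) * P y"
    by (simp add: sum.distrib sum_distrib_left)
  finally show ?thesis .
qed

lemma chan_out_qsc_prob_simplex:
  fixes P :: "'a::finite \<Rightarrow> real"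
  assumes P: "P \<in> prob_simplex" and "0 \<le> u" "0 \<le> v" "v = 1 - (real CARD('a) - 1) * u"
  shows "chan_out (qsc u v) P y = u + (v - u) * P y" "chan_out (qsc u v) P \<in> prob_simplex"
proof -
  show out: "chan_out (qsc u v) P y = u + (v - u) * P y" for y
    unfolding chan_out_qsc prob_simplex_sum[OF P] by simp
  have "0 \<le> u + (v - u) * P y" for y
  proof -
    have "0 \<le> u * (1 - P y) + v * P y"
      using assms prob_simplex_nonneg[OF P, of y] prob_simplex_le_1[OF P, of y] by simp
    then show ?thesis by argo
  qed
  moreover have "(\<Sum>y\<in>UNIV. u + (v - u) * P y) = real CARD('a) * u + (v - u) * (\<Sum>y\<in>UNIV. P y)"
    by (simp add: sum.distrib sum_distrib_left)
  then have "(\<Sum>y\<in>UNIV. u + (v - u) * P y) = 1"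
    unfolding prob_simplex_sum[OF P] using assms(4) by argo
  ultimately show "chan_out (qsc u v) P \<in> prob_simplex"
    unfolding prob_simplex_def out by blast
qed

lemma mobius_log_deriv_le:
  fixes h l z :: real
  assumes "0 \<le> l" "l \<le> h" "0 < h" "0 < z"
  shows "h * z / (h * z + l) - l * z / (l * z + h) \<le> (h - l) / (h + l)"
proof -
  have pos: "0 < h * z + l" "0 < l * z + h" "0 < h + l"
    using assms by (auto intro: add_pos_nonneg add_nonneg_pos)
  have "h * z / (h * z + l) - l * z / (l * z + h) = z * (h\<^sup>2 - l\<^sup>2) / ((h * z + l) * (l * z + h))"
    using pos by (simp add: field_simps power2_eq_square)
  moreover have "z * (h\<^sup>2 - l\<^sup>2) * (h + l) \<le> (h - l) * ((h * z + l) * (l * z + h))"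
  proof -
    have "(h - l) * ((h * z + l) * (l * z + h)) - z * (h\<^sup>2 - l\<^sup>2) * (h + l) = (h - l) * h * l * (z - 1)\<^sup>2"
      by (simp add: power2_eq_square algebra_simps)
    also have "\<dots> \<ge> 0" using assms by simp
    finally show ?thesis by simp
  qed
  ultimately show ?thesis using pos by (simp add: divide_simps)
qed

lemma ln_mobius_increment_le:
  fixes h l X Y :: real
  assumes hl: "0 \<le> l" "l \<le> h" "0 < h" and "0 < Y" "Y \<le> X"
  shows "ln ((h * X + l) / (l * X + h)) - ln ((h * Y + l) / (l * Y + h))
         \<le> (h - l) / (h + l) * (ln X - ln Y)"
proof -
  define c where "c = (h - l) / (h + l)"
  define F where "F t = c * t - ln (h * exp t + l) + ln (l * exp t + h)" for t
  have F_mono: "F (ln Y) \<le> F (ln X)"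
  proof (rule DERIV_nonneg_imp_nondecreasing[of "ln Y" "ln X" F])
    show "ln Y \<le> ln X" using assms by simp
    fix t
    have pos: "0 < h * exp t + l" "0 < l * exp t + h"
      using hl by (auto intro: add_pos_nonneg add_nonneg_pos)
    have "DERIV F t :> c - h * exp t / (h * exp t + l) + l * exp t / (l * exp t + h)"
      unfolding F_def using pos by (auto intro!: derivative_eq_intros simp: mult.commute)
    moreover have "0 \<le> c - h * exp t / (h * exp t + l) + l * exp t / (l * exp t + h)"
      unfolding c_def using mobius_log_deriv_le[OF hl, of "exp t"] by simp
    ultimately show "\<exists>y. DERIV F t :> y \<and> y \<ge> 0" by blast
  qed
  have pos: "0 < h * Z + l" "0 < l * Z + h" if "0 < Z" for Z :: real
    using hl that by (auto intro: add_pos_nonneg add_nonneg_pos)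
  have ln_ratio: "ln ((h * Z + l) / (l * Z + h)) = ln (h * Z + l) - ln (l * Z + h)" if "0 < Z" for Z
    using pos[OF that] by (simp add: ln_div)
  show ?thesis
    using F_mono ln_ratio[of X] ln_ratio[of Y] assms unfolding F_def c_def[symmetric]
    by (simp add: right_diff_distrib)
qed

(*
  For (h, l) = (max u v, min u v): the largest value of Q0(y) / Q1(y) compatible with
  P0 <= M P1, P1 <= M' P0 and unit total mass, a linear-fractional maximum attained at a vertex
  of the constraint polygon.
*)
definition output_ratio_bound :: "real \<Rightarrow> real \<Rightarrow> real \<Rightarrow> real \<Rightarrow> real" where
  "output_ratio_bound h l M M' =
     (h * M * (M' - 1) + l * (M - 1)) / (h * (M' - 1) + l * M' * (M - 1))"

lemma ln_output_ratio_bound_sum_le: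
  fixes h l M M' :: real
  assumes hl: "0 \<le> l" "l \<le> h" "0 < h" and M: "1 < M" "1 < M'"
  shows "ln (output_ratio_bound h l M M') + ln (output_ratio_bound h l M' M)
         \<le> (h - l) / (h + l) * (ln M + ln M')"
proof -
  \<comment> \<open>The two bounds multiply to g X / g Y for the Moebius map g z = (h z + l) / (l z + h),
    and X / Y = M M'.\<close>
  define s where "s = (M' - 1) / (M - 1)"
  define X where "X = M * s"
  define Y where "Y = s / M'"
  have "0 < s" unfolding s_def using M by simp
  then have "Y \<le> s" "s \<le> X" unfolding X_def Y_def using M
    by (simp_all add: divide_le_eq mult_le_cancel_right1)
  then have Y: "0 < Y" "Y \<le> X" unfolding Y_def using \<open>0 < s\<close> M by simp_all
  have "0 < M - 1" "0 < M' - 1" using M by simp_all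
  have num1: "h * M * (M' - 1) + l * (M - 1) = (M - 1) * (h * X + l)"
    and den1: "h * (M' - 1) + l * M' * (M - 1) = M' * (M - 1) * (h * Y + l)"
    and num2: "h * M' * (M - 1) + l * (M' - 1) = M' * (M - 1) * (l * Y + h)"
    and den2: "h * (M - 1) + l * M * (M' - 1) = (M - 1) * (l * X + h)"
    unfolding X_def Y_def s_def using M by (simp_all add: field_simps)
  have pos: "0 < h * Z + l" "0 < l * Z + h" if "0 < Z" for Z :: real
    using hl that by (auto intro: add_pos_nonneg add_nonneg_pos)
  have "ln (output_ratio_bound h l M M') + ln (output_ratio_bound h l M' M)
        = ln ((h * X + l) / (l * X + h)) - ln ((h * Y + l) / (l * Y + h))"
    unfolding output_ratio_bound_def num1 den1 num2 den2
    using M pos[of X] pos[of Y] Y by (simp add: ln_div ln_mult)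
  also have "\<dots> \<le> (h - l) / (h + l) * (ln X - ln Y)"
    by (rule ln_mobius_increment_le[OF hl Y])
  also have "ln X - ln Y = ln M + ln M'"
    unfolding X_def Y_def using M \<open>0 < s\<close> by (simp add: ln_mult ln_div)
  finally show ?thesis .
qed

lemma qsc_output_ratio_le:
  fixes u v M M' x0 x1 :: real
  assumes "0 \<le> u" "0 \<le> v"
    and "x0 \<le> M * x1" "x1 \<le> M' * x0" "M * x1 - x0 \<le> M - 1" "M' * x0 - x1 \<le> M' - 1"
  shows "(u + (v - u) * x0) * (max u v * (M' - 1) + min u v * M' * (M - 1))
         \<le> (max u v * M * (M' - 1) + min u v * (M - 1)) * (u + (v - u) * x1)"
proof -
  define a where "a = M' * x0 - x1"
  define b where "b = M * x1 - x0"
  have ab: "0 \<le> a" "a \<le> M' - 1" "0 \<le> b" "b \<le> M - 1"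
    using assms unfolding a_def b_def by auto
  let ?diff = "(max u v * M * (M' - 1) + min u v * (M - 1)) * (u + (v - u) * x1)
               - (u + (v - u) * x0) * (max u v * (M' - 1) + min u v * M' * (M - 1))"
  \<comment> \<open>The gap is a nonnegative combination of the slacks of the four constraints.\<close>
  have "0 \<le> ?diff"
  proof (cases "u \<le> v")
    case True
    then have "?diff = v * (M' - 1) * (v - u) * b + u * (M - 1) * (v - u) * (M' - 1 - a)"
      unfolding a_def b_def by (simp add: algebra_simps)
    then show ?thesis using True ab assms(1,2) by simp
  next
    case False
    then have "?diff = u * (M' - 1) * (u - v) * (M - 1 - b) + v * (M - 1) * (u - v) * a"
      unfolding a_def b_def by (simp add: algebra_simps)
    then show ?thesis using False ab assms(1,2) by simp
  qed
  then show ?thesis by simp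
qed

lemma Dinf_chan_qsc_le:
  fixes P0 P1 :: "'a::finite \<Rightarrow> real"
  assumes uv: "0 \<le> u" "0 \<le> v" "v = 1 - (real CARD('a) - 1) * u"
    and P0: "P0 \<in> prob_simplex" and P1: "P1 \<in> prob_simplex"
    and M: "1 < M" "1 < M'" and P0_le: "\<forall>x. P0 x \<le> M * P1 x" and P1_le: "\<forall>x. P1 x \<le> M' * P0 x"
  shows "Dinf (chan_out (qsc u v) P0) (chan_out (qsc u v) P1)
         \<le> ereal (ln (output_ratio_bound (max u v) (min u v) M M'))"
proof -
  let ?h = "max u v" and ?l = "min u v"
  have "0 < ?h" using uv by (cases "u = 0") auto
  then have den: "0 < ?h * (M' - 1) + ?l * M' * (M - 1)"
    using M uv by (auto intro!: add_pos_nonneg)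
  note Q = chan_out_qsc_prob_simplex[OF _ uv]
  obtain x0 where "0 < chan_out (qsc u v) P0 x0"
    using prob_simplex_ex_pos[OF Q(2)[OF P0]] .
  then show ?thesis
  proof (rule Dinf_le_ln[rotated])
    show "\<forall>x. 0 \<le> chan_out (qsc u v) P1 x" using prob_simplex_nonneg[OF Q(2)[OF P1]] by blast
    show "\<forall>y. chan_out (qsc u v) P0 y \<le> output_ratio_bound ?h ?l M M' * chan_out (qsc u v) P1 y"
    proof
      fix y
      have "(u + (v - u) * P0 y) * (?h * (M' - 1) + ?l * M' * (M - 1))
            \<le> (?h * M * (M' - 1) + ?l * (M - 1)) * (u + (v - u) * P1 y)"
        using P0_le P1_le prob_simplex_scaled_diff_le[OF P0 P1 P0_le] prob_simplex_scaled_diff_le[OF P1 P0 P1_le]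
        by (intro qsc_output_ratio_le uv(1,2)) auto
      then show "chan_out (qsc u v) P0 y \<le> output_ratio_bound ?h ?l M M' * chan_out (qsc u v) P1 y"
        unfolding Q(1)[OF P0] Q(1)[OF P1] output_ratio_bound_def using den
        by (simp add: field_simps)
    qed
  qed
qed

lemma DJinf_chan_qsc_le:
  fixes P0 P1 :: "'a::finite \<Rightarrow> real"
  assumes uv: "0 \<le> u" "0 \<le> v" "v = 1 - (real CARD('a) - 1) * u"
    and P0: "P0 \<in> prob_simplex" and P1: "P1 \<in> prob_simplex" and fin: "DJinf P0 P1 < \<infinity>"
  shows "DJinf (chan_out (qsc u v) P0) (chan_out (qsc u v) P1)
         \<le> ereal (\<bar>v - u\<bar> / (v + u)) * DJinf P0 P1"
proof -
  obtain M where M: "1 \<le> M" "Dinf P0 P1 = ereal (ln M)" "\<forall>x. P0 x \<le> M * P1 x"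
    using Dinf_finite_obtain[OF P0 P1 DJinf_finite_imp_Dinf_finite(1)[OF fin]] .
  obtain M' where M': "1 \<le> M'" "Dinf P1 P0 = ereal (ln M')" "\<forall>x. P1 x \<le> M' * P0 x"
    using Dinf_finite_obtain[OF P1 P0 DJinf_finite_imp_Dinf_finite(2)[OF fin]] .
  consider "P0 = P1" | "1 < M" "1 < M'"
    using M M' prob_simplex_eq_of_le[OF P0 P1] prob_simplex_eq_of_le[OF P1 P0]
    by (metis mult_1 order_le_less)
  then show ?thesis
  proof cases
    case 1
    then show ?thesis
      unfolding DJinf_def using Dinf_self[OF chan_out_qsc_prob_simplex(2)[OF P1 uv]] Dinf_self[OF P1]
      by simp
  next
    case 2
    let ?h = "max u v" and ?l = "min u v"
    have "DJinf (chan_out (qsc u v) P0) (chan_out (qsc u v) P1)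
          \<le> ereal (ln (output_ratio_bound ?h ?l M M')) + ereal (ln (output_ratio_bound ?h ?l M' M))"
      unfolding DJinf_def using Dinf_chan_qsc_le[OF uv P0 P1 2 M(3) M'(3)]
        Dinf_chan_qsc_le[OF uv P1 P0 2(2,1) M'(3) M(3)] by (rule add_mono)
    also have "\<dots> \<le> ereal ((?h - ?l) / (?h + ?l) * (ln M + ln M'))"
      using ln_output_ratio_bound_sum_le[of ?l ?h M M'] 2 uv by (cases "u = 0") auto
    also have "(?h - ?l) / (?h + ?l) = \<bar>v - u\<bar> / (v + u)"
      by (auto simp: max_def min_def)
    finally show ?thesis unfolding DJinf_def M(2) M'(2) by simp
  qed
qed

lemma etaJ_inf_qsc_le:
  assumes uv: "0 \<le> u" "0 \<le> v" "v = 1 - (real CARD('a) - 1) * u"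
  shows "etaJ_inf (qsc u v :: 'a::finite \<Rightarrow> 'a \<Rightarrow> real) \<le> ereal (\<bar>v - u\<bar> / (v + u))"
  unfolding etaJ_inf_def
proof (rule SUP_least, clarify)
  fix P0 P1 :: "'a \<Rightarrow> real"
  assume "P0 \<in> prob_simplex" "P1 \<in> prob_simplex" "0 < DJinf P0 P1" "DJinf P0 P1 < \<infinity>"
  then show "DJinf (chan_out (qsc u v) P0) (chan_out (qsc u v) P1) / DJinf P0 P1
             \<le> ereal (\<bar>v - u\<bar> / (v + u))"
    using DJinf_chan_qsc_le[OF uv] by (simp add: ereal_divide_le_pos mult.commute)
qed

lemma etaJ_inf_ge_tendsto:
  fixes W :: "'a \<Rightarrow> 'a::finite \<Rightarrow> real"
  assumes "\<And>n. P0 n \<in> prob_simplex" "\<And>n. P1 n \<in> prob_simplex"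
    and "\<And>n. 0 < DJinf (P0 n) (P1 n)" "\<And>n. DJinf (P0 n) (P1 n) < \<infinity>"
    and lim: "(\<lambda>n. DJinf (chan_out W (P0 n)) (chan_out W (P1 n)) / DJinf (P0 n) (P1 n)) \<longlonglongrightarrow> L"
  shows "L \<le> etaJ_inf W"
proof (rule LIMSEQ_le_const2[OF lim], intro exI allI impI)
  fix n
  have "(P0 n, P1 n) \<in> {(P0, P1). P0 \<in> prob_simplex \<and> P1 \<in> prob_simplex \<and>
          0 < DJinf P0 P1 \<and> DJinf P0 P1 < \<infinity>}"
    using assms by simp
  then show "DJinf (chan_out W (P0 n)) (chan_out W (P1 n)) / DJinf (P0 n) (P1 n) \<le> etaJ_inf W"
    unfolding etaJ_inf_def
    using SUP_upper[of _ _ "\<lambda>(P0, P1). DJinf (chan_out W P0) (chan_out W P1) / DJinf P0 P1"]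
    by fastforce
qed

definition two_point :: "'a \<Rightarrow> 'a \<Rightarrow> real \<Rightarrow> real \<Rightarrow> real \<Rightarrow> 'a \<Rightarrow> real" where
  "two_point a b \<alpha> \<beta> \<gamma> x = (if x = a then \<alpha> else if x = b then \<beta> else \<gamma>)"

lemma sum_two_point:
  fixes a b :: "'a::finite"
  assumes "a \<noteq> b"
  shows "(\<Sum>x\<in>UNIV. two_point a b \<alpha> \<beta> 0 x) = \<alpha> + \<beta>"
proof -
  have "(\<Sum>x\<in>UNIV. two_point a b \<alpha> \<beta> 0 x)
        = (\<Sum>x\<in>UNIV. (if x = a then \<alpha> else 0) + (if x = b then \<beta> else 0))"
    by (rule sum.cong) (use assms in \<open>auto simp: two_point_def\<close>)
  then show ?thesis by (simp add: sum.distrib)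
qed

lemma artanh_diff_div_add:
  fixes \<alpha> \<beta> :: real
  assumes "0 < \<alpha>" "0 < \<beta>"
  shows "artanh ((\<alpha> - \<beta>) / (\<alpha> + \<beta>)) = ln (\<alpha> / \<beta>) / 2"
proof -
  have "0 < \<alpha> + \<beta>" using assms by simp
  then have "1 + (\<alpha> - \<beta>) / (\<alpha> + \<beta>) = 2 * \<alpha> / (\<alpha> + \<beta>)"
    and "1 - (\<alpha> - \<beta>) / (\<alpha> + \<beta>) = 2 * \<beta> / (\<alpha> + \<beta>)"
    by (simp_all add: field_simps)
  then have "(1 + (\<alpha> - \<beta>) / (\<alpha> + \<beta>)) / (1 - (\<alpha> - \<beta>) / (\<alpha> + \<beta>)) = \<alpha> / \<beta>"
    using assms \<open>0 < \<alpha> + \<beta>\<close> by simp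
  then show ?thesis by (simp add: artanh_def)
qed

lemma two_point_swap: "a \<noteq> b \<Longrightarrow> two_point a b \<alpha> \<beta> \<gamma> = two_point b a \<beta> \<alpha> \<gamma>"
  by (auto simp: two_point_def)

lemma Dinf_two_point_swap:
  fixes a b :: "'a::finite"
  assumes "a \<noteq> b" "0 < q" "q \<le> p" "0 \<le> \<gamma>"
  shows "Dinf (two_point a b p q \<gamma>) (two_point a b q p \<gamma>) = ereal (ln (p / q))"
proof -
  have "q / p \<le> 1" "1 \<le> p / q" using assms by simp_all
  then have "q / p \<le> p / q" by linarith
  then have "Dinf (two_point a b p q \<gamma>) (two_point a b q p \<gamma>)
             = ereal (ln (two_point a b p q \<gamma> a / two_point a b q p \<gamma> a))"
    using assms by (intro Dinf_eq_ln_at_max) (auto simp: two_point_def)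
  then show ?thesis by (simp add: two_point_def)
qed

lemma DJinf_two_point_swap:
  fixes a b :: "'a::finite"
  assumes "a \<noteq> b" "0 < \<alpha>" "0 < \<beta>" "0 \<le> \<gamma>"
  shows "DJinf (two_point a b \<alpha> \<beta> \<gamma>) (two_point a b \<beta> \<alpha> \<gamma>)
         = ereal (4 * \<bar>artanh ((\<alpha> - \<beta>) / (\<alpha> + \<beta>))\<bar>)"
proof -
  have "DJinf (two_point a b \<alpha> \<beta> \<gamma>) (two_point a b \<beta> \<alpha> \<gamma>) = ereal (2 * \<bar>ln (\<alpha> / \<beta>)\<bar>)"
  proof (cases "\<beta> \<le> \<alpha>")
    case True
    then show ?thesis
      using assms Dinf_two_point_swap[of a b \<beta> \<alpha> \<gamma>] Dinf_two_point_swap[of b a \<beta> \<alpha> \<gamma>]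
      unfolding DJinf_def by (simp add: two_point_swap[of a b])
  next
    case False
    then have "ln (\<alpha> / \<beta>) = - ln (\<beta> / \<alpha>)" "ln (\<alpha> / \<beta>) \<le> 0"
      using assms by (simp_all add: ln_div)
    then show ?thesis
      using assms False Dinf_two_point_swap[of a b \<alpha> \<beta> \<gamma>] Dinf_two_point_swap[of b a \<alpha> \<beta> \<gamma>]
      unfolding DJinf_def by (simp add: two_point_swap[of a b])
  qed
  then show ?thesis using artanh_diff_div_add[OF assms(2,3)] by simp
qed

definition near_uniform :: "'a \<Rightarrow> 'a \<Rightarrow> real \<Rightarrow> 'a \<Rightarrow> real" where
  "near_uniform a b t = two_point a b ((1 + t) / 2) ((1 - t) / 2) 0"

lemma near_uniform_prob_simplex:
  fixes a b :: "'a::finite"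
  assumes "a \<noteq> b" "\<bar>t\<bar> \<le> 1"
  shows "near_uniform a b t \<in> prob_simplex"
  unfolding prob_simplex_def near_uniform_def using assms sum_two_point[OF assms(1)]
  by (auto simp: two_point_def field_simps abs_le_iff)

lemma near_uniform_pos_set:
  assumes "a \<noteq> b" "\<bar>t\<bar> < 1"
  shows "{x. 0 < near_uniform a b t x} = {a, b}"
  using assms by (auto simp: near_uniform_def two_point_def)

lemma near_uniform_ne_neg:
  assumes "t \<noteq> 0"
  shows "near_uniform a b t \<noteq> near_uniform a b (- t)"
proof
  assume "near_uniform a b t = near_uniform a b (- t)"
  then have "near_uniform a b t a = near_uniform a b (- t) a" by simp
  then show False using assms by (simp add: near_uniform_def two_point_def)
qed

lemma tendsto_near_uniform:
  assumes "t \<longlonglongrightarrow> 0"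
  shows "(\<lambda>n. near_uniform a b (t n) x) \<longlonglongrightarrow> (if x \<in> {a, b} then 1 / 2 else 0)"
proof -
  have "(\<lambda>n. (1 + t n) / 2) \<longlonglongrightarrow> 1 / 2" "(\<lambda>n. (1 - t n) / 2) \<longlonglongrightarrow> 1 / 2"
    using assms by (auto intro!: tendsto_eq_intros)
  then show ?thesis by (cases "x = a"; cases "x = b") (auto simp: near_uniform_def two_point_def)
qed

lemma artanh_eq_0_iff:
  fixes t :: real
  assumes "\<bar>t\<bar> < 1"
  shows "artanh t = 0 \<longleftrightarrow> t = 0"
proof -
  have "0 < (1 + t) / (1 - t)" using assms by simp
  then have "artanh t = 0 \<longleftrightarrow> (1 + t) / (1 - t) = 1" by (simp add: artanh_def)
  also have "\<dots> \<longleftrightarrow> t = 0" using assms by (auto simp: field_simps)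
  finally show ?thesis .
qed

lemma DJinf_near_uniform:
  fixes a b :: "'a::finite"
  assumes "a \<noteq> b" "\<bar>t\<bar> < 1"
  shows "DJinf (near_uniform a b t) (near_uniform a b (- t)) = ereal (4 * \<bar>artanh t\<bar>)"
  using DJinf_two_point_swap[of a b "(1 + t) / 2" "(1 - t) / 2" 0] assms
  by (simp add: near_uniform_def field_simps)

lemma DJinf_chan_qsc_near_uniform:
  fixes a b :: "'a::finite"
  assumes uv: "0 \<le> u" "0 \<le> v" "v = 1 - (real CARD('a) - 1) * u"
    and "a \<noteq> b" "\<bar>t\<bar> < 1"
  shows "DJinf (chan_out (qsc u v) (near_uniform a b t)) (chan_out (qsc u v) (near_uniform a b (- t)))
         = ereal (4 * \<bar>artanh ((v - u) / (v + u) * t)\<bar>)"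
proof -
  have out: "chan_out (qsc u v) (near_uniform a b s)
             = two_point a b (u + (v - u) * ((1 + s) / 2)) (u + (v - u) * ((1 - s) / 2)) u"
    if "\<bar>s\<bar> \<le> 1" for s
  proof
    fix y
    show "chan_out (qsc u v) (near_uniform a b s) y
          = two_point a b (u + (v - u) * ((1 + s) / 2)) (u + (v - u) * ((1 - s) / 2)) u y"
      using chan_out_qsc_prob_simplex(1)[OF near_uniform_prob_simplex[OF \<open>a \<noteq> b\<close> that] uv]
      by (simp add: near_uniform_def two_point_def)
  qed
  have "0 < v + u" using uv by (cases "u = 0") auto
  have "\<bar>(v - u) * t\<bar> < v + u"
  proof -
    have "\<bar>(v - u) * t\<bar> \<le> (v + u) * \<bar>t\<bar>"
      unfolding abs_mult using uv by (intro mult_right_mono) auto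
    also have "\<dots> < v + u" using \<open>0 < v + u\<close> assms(5) by simp
    finally show ?thesis .
  qed
  then have pos: "0 < u + (v - u) * ((1 + t) / 2)" "0 < u + (v - u) * ((1 - t) / 2)"
    by (auto simp: field_simps abs_less_iff)
  have "(u + (v - u) * ((1 + t) / 2) - (u + (v - u) * ((1 - t) / 2)))
        / (u + (v - u) * ((1 + t) / 2) + (u + (v - u) * ((1 - t) / 2))) = (v - u) / (v + u) * t"
    using \<open>0 < v + u\<close> by (simp add: field_simps)
  then show ?thesis
    using DJinf_two_point_swap[OF \<open>a \<noteq> b\<close> pos uv(1)] out[of t] out[of "- t"] assms(5)
    by simp
qed

lemma tendsto_artanh_ratio: "((\<lambda>t. artanh (c * t) / artanh t) \<longlongrightarrow> (c::real)) (at 0)"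
proof -
  have slope: "((\<lambda>t. artanh (d * t) / t) \<longlongrightarrow> d) (at 0)" for d :: real
  proof -
    have "((\<lambda>t. d * t) has_field_derivative d) (at 0)"
      by (auto intro!: derivative_eq_intros)
    from DERIV_chain'[OF this artanh_real_has_field_derivative]
    have "((\<lambda>t. artanh (d * t)) has_field_derivative d) (at 0)" by simp
    then show ?thesis by (simp add: DERIV_def)
  qed
  from tendsto_divide[OF slope[of c] slope[of 1]]
  have "((\<lambda>t. (artanh (c * t) / t) / (artanh t / t)) \<longlongrightarrow> c) (at 0)" by simp
  moreover have "\<forall>\<^sub>F t in at 0. (artanh (c * t) / t) / (artanh t / t) = artanh (c * t) / artanh t"
    by (auto simp: eventually_at_filter)
  ultimately show ?thesis by (rule Lim_transform_eventually)
qed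

lemma tendsto_qsc_ratio_near_uniform:
  fixes a b :: "'a::finite"
  assumes uv: "0 \<le> u" "0 \<le> v" "v = 1 - (real CARD('a) - 1) * u"
    and "a \<noteq> b" and t: "t \<longlonglongrightarrow> 0" "\<And>n. t n \<noteq> 0" "\<And>n. \<bar>t n\<bar> < 1"
  shows "(\<lambda>n. DJinf (chan_out (qsc u v) (near_uniform a b (t n))) (chan_out (qsc u v) (near_uniform a b (- t n)))
                / DJinf (near_uniform a b (t n)) (near_uniform a b (- t n)))
         \<longlonglongrightarrow> ereal (\<bar>v - u\<bar> / (v + u))"
proof -
  let ?c = "(v - u) / (v + u)"
  have "0 < v + u" using uv by (cases "u = 0") auto
  have "filterlim t (at 0) sequentially"
    using t by (intro filterlim_atI) auto
  then have "(\<lambda>n. artanh (?c * t n) / artanh (t n)) \<longlonglongrightarrow> ?c"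
    by (rule filterlim_compose[OF tendsto_artanh_ratio])
  then have "(\<lambda>n. ereal \<bar>artanh (?c * t n) / artanh (t n)\<bar>) \<longlonglongrightarrow> ereal \<bar>?c\<bar>"
    by (intro tendsto_ereal tendsto_rabs)
  moreover have "artanh (t n) \<noteq> 0" for n
    using t artanh_eq_0_iff by blast
  ultimately show ?thesis
    using \<open>0 < v + u\<close> t(3)
    by (simp add: DJinf_near_uniform[OF \<open>a \<noteq> b\<close>] DJinf_chan_qsc_near_uniform[OF uv \<open>a \<noteq> b\<close>])
qed

lemma near_uniform_witness:
  fixes a b :: "'a::finite"
  assumes uv: "0 \<le> u" "0 \<le> v" "v = 1 - (real CARD('a) - 1) * u" and "a \<noteq> b"
  shows "\<exists>P0 P1 :: nat \<Rightarrow> 'a \<Rightarrow> real.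
           (\<forall>n. P0 n \<in> prob_simplex \<and> P1 n \<in> prob_simplex \<and> P0 n \<noteq> P1 n
                \<and> {x. P0 n x > 0} = {a, b} \<and> {x. P1 n x > 0} = {a, b})
         \<and> (\<forall>x. (\<lambda>n. P0 n x) \<longlonglongrightarrow> (if x \<in> {a, b} then 1/2 else 0))
         \<and> (\<forall>x. (\<lambda>n. P1 n x) \<longlonglongrightarrow> (if x \<in> {a, b} then 1/2 else 0))
         \<and> (\<lambda>n. DJinf (chan_out (qsc u v) (P0 n)) (chan_out (qsc u v) (P1 n))
                   / DJinf (P0 n) (P1 n)) \<longlonglongrightarrow> ereal (\<bar>v - u\<bar> / (v + u))"
proof -
  define t :: "nat \<Rightarrow> real" where "t n = inverse (real (Suc (Suc n)))" for n
  have t: "t \<longlonglongrightarrow> 0" "\<And>n. t n \<noteq> 0" "\<And>n. \<bar>t n\<bar> < 1"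
    unfolding t_def using LIMSEQ_ignore_initial_segment[OF LIMSEQ_inverse_real_of_nat, of 1]
    by (simp_all add: inverse_less_1_iff)
  have t_minus: "(\<lambda>n. - t n) \<longlonglongrightarrow> 0" using tendsto_minus[OF t(1)] by simp
  show ?thesis
  proof (rule exI[of _ "\<lambda>n. near_uniform a b (t n)"], rule exI[of _ "\<lambda>n. near_uniform a b (- t n)"],
      intro conjI allI)
    fix n
    show "near_uniform a b (t n) \<in> prob_simplex" "near_uniform a b (- t n) \<in> prob_simplex"
      "near_uniform a b (t n) \<noteq> near_uniform a b (- t n)"
      "{x. near_uniform a b (t n) x > 0} = {a, b}" "{x. near_uniform a b (- t n) x > 0} = {a, b}"
      using \<open>a \<noteq> b\<close> t(2,3)[of n]
      by (simp_all add: near_uniform_prob_simplex near_uniform_pos_set near_uniform_ne_neg)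
  next
    fix x
    show "(\<lambda>n. near_uniform a b (t n) x) \<longlonglongrightarrow> (if x \<in> {a, b} then 1/2 else 0)"
      "(\<lambda>n. near_uniform a b (- t n) x) \<longlonglongrightarrow> (if x \<in> {a, b} then 1/2 else 0)"
      by (rule tendsto_near_uniform[OF t(1)], rule tendsto_near_uniform[OF t_minus])
  qed (rule tendsto_qsc_ratio_near_uniform[OF uv \<open>a \<noteq> b\<close> t])
qed

lemma etaJ_inf_qsc_ge:
  assumes "CARD('a::finite) \<ge> 2"
    and uv: "0 \<le> u" "0 \<le> v" "v = 1 - (real CARD('a) - 1) * u"
  shows "ereal (\<bar>v - u\<bar> / (v + u)) \<le> etaJ_inf (qsc u v :: 'a \<Rightarrow> 'a \<Rightarrow> real)"
proof -
  obtain a b :: 'a where "a \<noteq> b"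
    using assms(1) card_le_Suc0_iff_eq[of "UNIV :: 'a set"] by force
  obtain P0 P1 :: "nat \<Rightarrow> 'a \<Rightarrow> real" where
      adm: "\<forall>n. P0 n \<in> prob_simplex \<and> P1 n \<in> prob_simplex \<and> P0 n \<noteq> P1 n
              \<and> {x. P0 n x > 0} = {a, b} \<and> {x. P1 n x > 0} = {a, b}"
    and lim: "(\<lambda>n. DJinf (chan_out (qsc u v) (P0 n)) (chan_out (qsc u v) (P1 n)) / DJinf (P0 n) (P1 n))
              \<longlonglongrightarrow> ereal (\<bar>v - u\<bar> / (v + u))"
    using near_uniform_witness[OF uv \<open>a \<noteq> b\<close>] by (elim exE conjE) (rule that)
  have "0 < DJinf (P0 n) (P1 n) \<and> DJinf (P0 n) (P1 n) < \<infinity>" for n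
    using adm DJinf_pos_finite_of_same_support[of "P0 n" "P1 n"] by simp
  with adm show ?thesis by (intro etaJ_inf_ge_tendsto[OF _ _ _ _ lim]) auto
qed

theorem theorem4p6:
  fixes u v :: real
  assumes q2: "CARD('a::finite) \<ge> 2"
    and u01: "0 \<le> u" "u \<le> 1" and v01: "0 \<le> v" "v \<le> 1"
    and v_def: "v = 1 - (real CARD('a) - 1) * u"
  shows "etaJ_inf (qsc u v :: 'a \<Rightarrow> 'a \<Rightarrow> real) = ereal (\<bar>v - u\<bar> / (v + u))
    \<and> (\<forall>a b :: 'a. a \<noteq> b \<longrightarrow>
        (\<exists>P0 P1 :: nat \<Rightarrow> 'a \<Rightarrow> real.
           (\<forall>n. P0 n \<in> prob_simplex \<and> P1 n \<in> prob_simplex \<and> P0 n \<noteq> P1 n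
                \<and> {x. P0 n x > 0} = {a, b} \<and> {x. P1 n x > 0} = {a, b})
         \<and> (\<forall>x. (\<lambda>n. P0 n x) \<longlonglongrightarrow> (if x \<in> {a, b} then 1/2 else 0))
         \<and> (\<forall>x. (\<lambda>n. P1 n x) \<longlonglongrightarrow> (if x \<in> {a, b} then 1/2 else 0))
         \<and> (\<lambda>n. DJinf (chan_out (qsc u v) (P0 n)) (chan_out (qsc u v) (P1 n))
                   / DJinf (P0 n) (P1 n)) \<longlonglongrightarrow> ereal (\<bar>v - u\<bar> / (v + u))))"
proof -
  have "etaJ_inf (qsc u v :: 'a \<Rightarrow> 'a \<Rightarrow> real) = ereal (\<bar>v - u\<bar> / (v + u))"
    using etaJ_inf_qsc_le[OF u01(1) v01(1) v_def] etaJ_inf_qsc_ge[OF q2 u01(1) v01(1) v_def]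
    by (rule antisym)
  then show ?thesis
    by (intro conjI allI impI near_uniform_witness[OF u01(1) v01(1) v_def])
qed

end
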